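(* Let $\gamma=\gamma_1\cup\gamma_2$ be a finite set of interactions with $\mathit{Act}(\gamma_1)\cap\mathit{Act}(\gamma_2)=\emptyset$. Then $\mathcal{E}(\gamma)\equiv\mathcal{E}(\gamma_1)\wedge\mathcal{E}(\gamma_2)$, i.e. the two formulas are satisfied by exactly the same assignments of real values to the history clocks $h_a$, $a\in\mathit{Act}(\gamma)$.
   Context: An interaction is a finite nonempty set of actions; for a set of interactions $\gamma$, $\mathit{Act}(\gamma)=\bigcup_{\alpha\in\gamma}\alpha$. Each action $a$ has an associated real variable (history clock) $h_a$. For a set of interactions $\gamma$ and a set of actions $\alpha$, $\gamma\ominus\alpha=\{\beta\setminus\alpha\mid\beta\in\gamma,\ \beta\not\subseteq\alpha\}$. Define recursively $\mathcal{E}(\emptyset)=\mathit{true}$ and, for $\gamma\neq\emptyset$, $\mathcal{E}(\gamma)=\bigvee_{\alpha\in\gamma}\Big(\bigwedge_{a_i,a_j\in\alpha}h_{a_i}=h_{a_j}\ \wedge\bigwedge_{a_i\in\alpha,\ a_k\in\mathit{Act}(\gamma\ominus\alpha)}h_{a_i}\le h_{a_k}\ \wedge\ \mathcal{E}(\gamma\ominus\alpha)\Big)$. *)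

theory Defs
  imports Complex_Main
begin

text \<open>A valuation of the history clocks
is a function h :: 'a => real (h a is the value of the clock h_a).\<close>

definition interaction :: "'a set \<Rightarrow> bool" where
  "interaction \<alpha> \<longleftrightarrow> finite \<alpha> \<and> \<alpha> \<noteq> {}"

definition Act :: "'a set set \<Rightarrow> 'a set" where
  "Act \<gamma> = \<Union>\<gamma>"

definition ominus :: "'a set set \<Rightarrow> 'a set \<Rightarrow> 'a set set" (infixl "\<ominus>" 65) where
  "\<gamma> \<ominus> \<alpha> = {\<beta> - \<alpha> | \<beta>. \<beta> \<in> \<gamma> \<and> \<not> \<beta> \<subseteq> \<alpha>}"

text \<open>The formula E(gamma), given as its satisfaction relation on clock valuations.
The recursion of the paper is well-founded on finite sets of (nonempty) interactions
(each step removes a nonempty interaction's actions), so it is rendered as the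
inductive predicate whose rules are exactly the recursive clauses:
E({}) = true, and E(gamma) for nonempty gamma is the disjunction over alpha in gamma.\<close>

inductive E :: "'a set set \<Rightarrow> ('a \<Rightarrow> real) \<Rightarrow> bool" where
  E_empty: "E {} h"
| E_step: "\<lbrakk> \<alpha> \<in> \<gamma>;
             \<forall>ai\<in>\<alpha>. \<forall>aj\<in>\<alpha>. h ai = h aj;
             \<forall>ai\<in>\<alpha>. \<forall>ak\<in>Act (\<gamma> \<ominus> \<alpha>). h ai \<le> h ak;
             E (\<gamma> \<ominus> \<alpha>) h \<rbrakk> \<Longrightarrow> E \<gamma> h"

end

theory Submission
  imports Defs
begin

text \<open>A derivation of \<open>E \<gamma> h\<close> is a schedule of the interactions of \<open>\<gamma>\<close>: at each step an
interaction fires whose clocks are equal and bounded by all remaining clocks. If \<open>\<gamma>1\<close> and \<open>\<gamma>2\<close>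
share no action, removing an interaction of one component leaves the other untouched, so a
schedule of \<open>\<gamma>1 \<union> \<gamma>2\<close> restricts to schedules of both. Conversely two schedules are merged by
always firing the first interaction with the smaller clock value: that value is below every clock
of its own component by the scheduling condition, and below every clock of the other component
because the other component's first value is below all of its clocks.\<close>

lemma Act_ominus: "Act (\<gamma> \<ominus> \<alpha>) = Act \<gamma> - \<alpha>"
  unfolding Act_def ominus_def by blast

lemma ominus_Un: "(\<gamma>1 \<union> \<gamma>2) \<ominus> \<alpha> = (\<gamma>1 \<ominus> \<alpha>) \<union> (\<gamma>2 \<ominus> \<alpha>)"
  unfolding ominus_def by blast

lemma nonempty_ominus: "\<beta> \<in> \<gamma> \<ominus> \<alpha> \<Longrightarrow> \<beta> \<noteq> {}"
  unfolding ominus_def by blast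

lemma ominus_disjoint:
  assumes "\<forall>\<beta>\<in>\<gamma>. \<beta> \<noteq> {}" and "Act \<gamma> \<inter> \<alpha> = {}"
  shows "\<gamma> \<ominus> \<alpha> = \<gamma>"
proof -
  have "\<beta> - \<alpha> = \<beta> \<and> \<not> \<beta> \<subseteq> \<alpha>" if "\<beta> \<in> \<gamma>" for \<beta>
    using assms that unfolding Act_def by blast
  then show ?thesis
    unfolding ominus_def by force
qed

lemma Un_ominus_disjoint:
  assumes "\<alpha> \<in> \<gamma>1" and "\<forall>\<beta>\<in>\<gamma>2. \<beta> \<noteq> {}" and "Act \<gamma>1 \<inter> Act \<gamma>2 = {}"
  shows "(\<gamma>1 \<union> \<gamma>2) \<ominus> \<alpha> = (\<gamma>1 \<ominus> \<alpha>) \<union> \<gamma>2"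
proof -
  have "Act \<gamma>2 \<inter> \<alpha> = {}"
    using assms(1,3) unfolding Act_def by blast
  then show ?thesis
    by (simp add: ominus_Un ominus_disjoint[OF assms(2)])
qed

text \<open>Rule induction for \<open>E\<close> with the valuation kept fixed (\<open>E.induct\<close> generalises it).\<close>

lemma E_induct [consumes 1, case_names empty step]:
  assumes "E \<gamma> h"
    and "P {}"
    and "\<And>\<alpha> \<gamma>. \<alpha> \<in> \<gamma> \<Longrightarrow> \<forall>ai\<in>\<alpha>. \<forall>aj\<in>\<alpha>. h ai = h aj \<Longrightarrow>
           \<forall>ai\<in>\<alpha>. \<forall>ak\<in>Act (\<gamma> \<ominus> \<alpha>). h ai \<le> h ak \<Longrightarrow> E (\<gamma> \<ominus> \<alpha>) h \<Longrightarrow> P (\<gamma> \<ominus> \<alpha>) \<Longrightarrow>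
           P \<gamma>"
  shows "P \<gamma>"
proof -
  have "h' = h \<longrightarrow> P \<gamma>'" if "E \<gamma>' h'" for \<gamma>' h'
    using that by induction (metis assms(2), metis assms(3))
  then show ?thesis using assms(1) by blast
qed

lemma first_le_Act:
  fixes h :: "'a \<Rightarrow> 'b::preorder"
  assumes "\<forall>ai\<in>\<alpha>. \<forall>aj\<in>\<alpha>. h ai = h aj" and "\<forall>ai\<in>\<alpha>. \<forall>ak\<in>Act (\<gamma> \<ominus> \<alpha>). h ai \<le> h ak"
    and "a \<in> \<alpha>" and "b \<in> Act \<gamma>"
  shows "h a \<le> h b"
proof (cases "b \<in> \<alpha>")
  case True
  then have "h a = h b" using assms(1,3) by blast
  then show ?thesis by simp
next
  case False
  then have "b \<in> Act (\<gamma> \<ominus> \<alpha>)" using assms(4) by (simp add: Act_ominus)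
  then show ?thesis using assms(2,3) by blast
qed

lemma first_le_Act_trans:
  fixes h :: "'a \<Rightarrow> 'b::preorder"
  assumes "\<forall>ai\<in>\<alpha>. \<forall>aj\<in>\<alpha>. h ai = h aj" and "x \<in> \<alpha>"
    and "\<forall>ai\<in>\<beta>. \<forall>aj\<in>\<beta>. h ai = h aj" and "\<forall>ai\<in>\<beta>. \<forall>ak\<in>Act (\<gamma> \<ominus> \<beta>). h ai \<le> h ak"
    and "y \<in> \<beta>" and "h x \<le> h y"
  shows "\<forall>ai\<in>\<alpha>. \<forall>ak\<in>Act \<gamma>. h ai \<le> h ak"
proof (intro ballI)
  fix ai ak assume "ai \<in> \<alpha>" and "ak \<in> Act \<gamma>"
  have "h ai = h x" using assms(1,2) \<open>ai \<in> \<alpha>\<close> by blast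
  also have "\<dots> \<le> h y" by (fact assms(6))
  also have "\<dots> \<le> h ak" by (rule first_le_Act[OF assms(3,4,5) \<open>ak \<in> Act \<gamma>\<close>])
  finally show "h ai \<le> h ak" .
qed

lemma E_Un_stepI:
  assumes "\<alpha> \<in> \<gamma>1" and "\<forall>ai\<in>\<alpha>. \<forall>aj\<in>\<alpha>. h ai = h aj"
    and "\<forall>ai\<in>\<alpha>. \<forall>ak\<in>Act (\<gamma>1 \<ominus> \<alpha>) \<union> Act \<gamma>2. h ai \<le> h ak"
    and "E ((\<gamma>1 \<ominus> \<alpha>) \<union> \<gamma>2) h"
    and "\<forall>\<beta>\<in>\<gamma>2. \<beta> \<noteq> {}" and "Act \<gamma>1 \<inter> Act \<gamma>2 = {}"
  shows "E (\<gamma>1 \<union> \<gamma>2) h"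
proof (rule E_step)
  have split: "(\<gamma>1 \<union> \<gamma>2) \<ominus> \<alpha> = (\<gamma>1 \<ominus> \<alpha>) \<union> \<gamma>2"
    by (rule Un_ominus_disjoint[OF assms(1,5,6)])
  show "\<alpha> \<in> \<gamma>1 \<union> \<gamma>2" using assms(1) by blast
  show "\<forall>ai\<in>\<alpha>. \<forall>aj\<in>\<alpha>. h ai = h aj" by (fact assms(2))
  show "\<forall>ai\<in>\<alpha>. \<forall>ak\<in>Act ((\<gamma>1 \<union> \<gamma>2) \<ominus> \<alpha>). h ai \<le> h ak"
    using assms(3) unfolding split by (simp add: Act_def)
  show "E ((\<gamma>1 \<union> \<gamma>2) \<ominus> \<alpha>) h" unfolding split by (fact assms(4))
qed

lemma E_Un_disjointD1:
  assumes "E (\<gamma>1 \<union> \<gamma>2) h" and "\<forall>\<beta>\<in>\<gamma>1 \<union> \<gamma>2. \<beta> \<noteq> {}" and "Act \<gamma>1 \<inter> Act \<gamma>2 = {}"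
  shows "E \<gamma>1 h"
proof -
  have "E \<gamma> h \<Longrightarrow> \<gamma> = \<gamma>1 \<union> \<gamma>2 \<Longrightarrow> \<forall>\<beta>\<in>\<gamma>. \<beta> \<noteq> {} \<Longrightarrow> Act \<gamma>1 \<inter> Act \<gamma>2 = {} \<Longrightarrow> E \<gamma>1 h"
    for \<gamma>
  proof (induction arbitrary: \<gamma>1 \<gamma>2 rule: E_induct)
    case empty
    then show ?case by (simp add: E_empty)
  next
    case (step \<alpha> \<gamma>)
    have nonempty: "\<forall>\<beta>\<in>\<gamma> \<ominus> \<alpha>. \<beta> \<noteq> {}" using nonempty_ominus by blast
    have nonempty1: "\<forall>\<beta>\<in>\<gamma>1. \<beta> \<noteq> {}" and nonempty2: "\<forall>\<beta>\<in>\<gamma>2. \<beta> \<noteq> {}"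
      using step.prems(1,2) by simp_all
    show ?case
    proof (cases "\<alpha> \<in> \<gamma>1")
      case True
      have split: "\<gamma> \<ominus> \<alpha> = (\<gamma>1 \<ominus> \<alpha>) \<union> \<gamma>2"
        unfolding step.prems(1) by (rule Un_ominus_disjoint[OF True nonempty2 step.prems(3)])
      have "Act (\<gamma>1 \<ominus> \<alpha>) \<inter> Act \<gamma>2 = {}"
        using step.prems(3) by (auto simp: Act_ominus)
      then have "E (\<gamma>1 \<ominus> \<alpha>) h" by (rule step.IH[OF split nonempty])
      moreover have "\<forall>ai\<in>\<alpha>. \<forall>ak\<in>Act (\<gamma>1 \<ominus> \<alpha>). h ai \<le> h ak"
        using step.hyps(3) unfolding split by (simp add: Act_def)
      ultimately show ?thesis by (intro E_step[OF True step.hyps(2)])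
    next
      case False
      then have "\<alpha> \<in> \<gamma>2" using step.hyps(1) step.prems(1) by simp
      then have "\<gamma>2 \<union> \<gamma>1 \<ominus> \<alpha> = (\<gamma>2 \<ominus> \<alpha>) \<union> \<gamma>1"
        using step.prems(3) by (intro Un_ominus_disjoint nonempty1) auto
      then have split: "\<gamma> \<ominus> \<alpha> = \<gamma>1 \<union> (\<gamma>2 \<ominus> \<alpha>)"
        unfolding step.prems(1) by (simp add: Un_commute)
      have "Act \<gamma>1 \<inter> Act (\<gamma>2 \<ominus> \<alpha>) = {}"
        using step.prems(3) by (auto simp: Act_ominus)
      then show ?thesis by (rule step.IH[OF split nonempty])
    qed
  qed
  then show ?thesis using assms by blast
qed

lemma E_Un_disjointI:
  assumes "E \<gamma>1 h" and "E \<gamma>2 h"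
    and "\<forall>\<beta>\<in>\<gamma>1 \<union> \<gamma>2. \<beta> \<noteq> {}" and "Act \<gamma>1 \<inter> Act \<gamma>2 = {}"
  shows "E (\<gamma>1 \<union> \<gamma>2) h"
  using assms
proof (induction arbitrary: \<gamma>2 rule: E_induct)
  case empty
  then show ?case by simp
next
  case (step \<alpha>1 \<gamma>1)
  note hyps1 = step.hyps and IH1 = step.IH
  from step.prems(1) show ?case using step.prems(2,3)
  proof (induction rule: E_induct)
    case empty
    then show ?case using E_step[OF hyps1(1-4)] by simp
  next
    case (step \<alpha>2 \<gamma>2)
    have nonempty1: "\<forall>\<beta>\<in>\<gamma>1. \<beta> \<noteq> {}" and nonempty2: "\<forall>\<beta>\<in>\<gamma>2. \<beta> \<noteq> {}"
      using step.prems(1) by simp_all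
    obtain x1 where x1: "x1 \<in> \<alpha>1" using hyps1(1) nonempty1 by blast
    obtain x2 where x2: "x2 \<in> \<alpha>2" using step.hyps(1) nonempty2 by blast
    show ?case
    proof (cases "h x1 \<le> h x2")
      case True
      then have "\<forall>ai\<in>\<alpha>1. \<forall>ak\<in>Act \<gamma>2. h ai \<le> h ak"
        by (rule first_le_Act_trans[OF hyps1(2) x1 step.hyps(2,3) x2])
      with hyps1(3) have "\<forall>ai\<in>\<alpha>1. \<forall>ak\<in>Act (\<gamma>1 \<ominus> \<alpha>1) \<union> Act \<gamma>2. h ai \<le> h ak"
        by blast
      moreover have "E ((\<gamma>1 \<ominus> \<alpha>1) \<union> \<gamma>2) h"
      proof (rule IH1)
        show "E \<gamma>2 h" by (rule E_step[OF step.hyps(1-4)])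
        show "\<forall>\<beta>\<in>\<gamma>1 \<ominus> \<alpha>1 \<union> \<gamma>2. \<beta> \<noteq> {}" using nonempty_ominus nonempty2 by blast
        show "Act (\<gamma>1 \<ominus> \<alpha>1) \<inter> Act \<gamma>2 = {}" using step.prems(2) by (auto simp: Act_ominus)
      qed
      ultimately show ?thesis
        by (rule E_Un_stepI[OF hyps1(1,2) _ _ nonempty2 step.prems(2)])
    next
      case False
      then have "\<forall>ai\<in>\<alpha>2. \<forall>ak\<in>Act \<gamma>1. h ai \<le> h ak"
        by (intro first_le_Act_trans[OF step.hyps(2) x2 hyps1(2,3) x1]) simp
      with step.hyps(3) have "\<forall>ai\<in>\<alpha>2. \<forall>ak\<in>Act (\<gamma>2 \<ominus> \<alpha>2) \<union> Act \<gamma>1. h ai \<le> h ak"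
        by blast
      moreover have "E (\<gamma>1 \<union> (\<gamma>2 \<ominus> \<alpha>2)) h"
      proof (rule step.IH)
        show "\<forall>\<beta>\<in>\<gamma>1 \<union> (\<gamma>2 \<ominus> \<alpha>2). \<beta> \<noteq> {}" using nonempty_ominus nonempty1 by blast
        show "Act \<gamma>1 \<inter> Act (\<gamma>2 \<ominus> \<alpha>2) = {}" using step.prems(2) by (auto simp: Act_ominus)
      qed
      then have "E ((\<gamma>2 \<ominus> \<alpha>2) \<union> \<gamma>1) h" by (simp add: Un_commute)
      moreover have "Act \<gamma>2 \<inter> Act \<gamma>1 = {}" using step.prems(2) by blast
      ultimately have "E (\<gamma>2 \<union> \<gamma>1) h"
        by (rule E_Un_stepI[OF step.hyps(1,2) _ _ nonempty1])
      then show ?thesis by (simp add: Un_commute)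
    qed
  qed
qed

theorem proposition3:
  fixes \<gamma>1 \<gamma>2 :: "'a set set"
  assumes "finite (\<gamma>1 \<union> \<gamma>2)"
    and "\<forall>\<alpha>\<in>\<gamma>1 \<union> \<gamma>2. interaction \<alpha>"
    and "Act \<gamma>1 \<inter> Act \<gamma>2 = {}"
  shows "\<forall>h :: 'a \<Rightarrow> real. E (\<gamma>1 \<union> \<gamma>2) h \<longleftrightarrow> E \<gamma>1 h \<and> E \<gamma>2 h"
proof
  fix h :: "'a \<Rightarrow> real"
  have nonempty: "\<forall>\<beta>\<in>\<gamma>1 \<union> \<gamma>2. \<beta> \<noteq> {}" and nonempty': "\<forall>\<beta>\<in>\<gamma>2 \<union> \<gamma>1. \<beta> \<noteq> {}"
    using assms(2) unfolding interaction_def by blast+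
  have disjoint': "Act \<gamma>2 \<inter> Act \<gamma>1 = {}" using assms(3) by blast
  show "E (\<gamma>1 \<union> \<gamma>2) h \<longleftrightarrow> E \<gamma>1 h \<and> E \<gamma>2 h"
    using E_Un_disjointD1[OF _ nonempty assms(3)] E_Un_disjointD1[OF _ nonempty' disjoint']
      E_Un_disjointI[OF _ _ nonempty assms(3)]
    by (auto simp: Un_commute)
qed

end
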